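(* Let $\mathfrak{g}$ be a nice nilpotent Lie algebra of dimension $n$ with nice diagram $\Delta$, $m$ arrows, and structure constants $c\in\mathbb{R}^m$, and let $k\in\mathbb{R}$ and $\delta\in(\mathbb{Z}_2)^n$. Then $\mathfrak{g}$ has a diagonal metric $g=\sum_i g_i e^i\otimes e^i$ with $\operatorname{logsign} g=\delta$ whose Ricci operator satisfies $\operatorname{Ric}=\frac12 k\,\mathrm{id}$ if and only if there exists $X\in\mathbb{R}^m$ such that: (K) $M_\Delta^{T}X=[k]$; (H) $X$ does not belong to any coordinate hyperplane, i.e. all entries of $X$ are nonzero; (L) $\operatorname{logsign} X=M_{\Delta,2}\,\delta$; (P) for a basis $\alpha_1,\dots,\alpha_r$ of $\ker M_\Delta^{T}\subset\mathbb{R}^m$, one has $\lvert X\rvert^{\alpha_i}=\lvert c\rvert^{2\alpha_i}$ for $i=1,\dots,r$.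
   Context: A nice basis of a real Lie algebra $\mathfrak{g}$ is a basis $\{e_1,\dots,e_n\}$ with dual basis $\{e^1,\dots,e^n\}$ such that each bracket $[e_i,e_j]$ is a multiple of some $e_h$ and each contraction $e_i\lrcorner\,de^j$ is a multiple of some $e^h$ (here $d$ is the Chevalley–Eilenberg differential, $de^k(x,y)=-e^k([x,y])$); a nice Lie algebra is a Lie algebra with a fixed nice basis. For a nice nilpotent Lie algebra, the nice diagram $\Delta$ has nodes $1,\dots,n$ and an arrow $i\xrightarrow{j}k$ (from $i$ to $k$, labelled by $j$) whenever $e_k$ is a nonzero multiple of $[e_i,e_j]$. Let $\mathcal I_\Delta$ be the set of triples $\{\{i,j\},k\}$ for which $i\xrightarrow{j}k$ is an arrow, $m=\lvert\mathcal I_\Delta\rvert$, ordered lexicographically by $(k,i,j)$ with $i<j$. The structure constants are the vector $c=(c_{ijk})\in\mathbb{R}^m$ (indexed by $\mathcal I_\Delta$, $i<j$) with $de^k=\sum c_{ijk}e^{i}\wedge e^{j}$; all its entries are nonzero. The root matrix $M_\Delta$ is the $m\times n$ integer matrix whose row indexed by $\{\{i,j\},k\}$ has entry $1$ in column $k$, entry $-1$ in columns $i$ and $j$, and $0$ elsewhere; $M_{\Delta,2}\colon(\mathbb{Z}_2)^n\to(\mathbb{Z}_2)^m$ is its reduction mod 2. For $x\in\mathbb{R}\setminus\{0\}$, $\operatorname{logsign}x=0$ if $x>0$ and $1$ if $x<0$; for a vector it is applied componentwise, and for a diagonal metric $\operatorname{logsign} g=(\operatorname{logsign} g_i)_i$.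 A diagonal metric is a nondegenerate (possibly indefinite) scalar product on $\mathfrak{g}$ for which the nice basis is orthogonal; $\operatorname{Ric}$ denotes the Ricci operator of the corresponding left-invariant pseudoriemannian metric. $[k]\in\mathbb{R}^n$ is the vector with all entries $k$. For $X,\alpha\in\mathbb{R}^m$, $\lvert X\rvert^\alpha=\prod_j\lvert x_j\rvert^{\alpha_j}$. *)

theory Defs
  imports Complex_Main
begin

text \<open>Real Lie algebra of dimension n with fixed basis e_1,...,e_n, encoded by its
  structure constants: [e_i,e_j] = sum over h in {1..n} of C i j h e_h.
  Vectors of the Lie algebra are functions nat => real (coordinates w.r.t. the basis,
  only the coordinates 1..n matter).\<close>

type_synonym sconst = "nat \<Rightarrow> nat \<Rightarrow> nat \<Rightarrow> real"
type_synonym triple = "nat \<times> nat \<times> nat"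

definition ev :: "nat \<Rightarrow> nat \<Rightarrow> real" where
  "ev i = (\<lambda>h. if h = i then 1 else 0)"

definition brk :: "nat \<Rightarrow> sconst \<Rightarrow> (nat \<Rightarrow> real) \<Rightarrow> (nat \<Rightarrow> real) \<Rightarrow> nat \<Rightarrow> real" where
  "brk n C u v = (\<lambda>h. \<Sum>i\<in>{1..n}. \<Sum>j\<in>{1..n}. u i * v j * C i j h)"

definition lie_sc :: "nat \<Rightarrow> sconst \<Rightarrow> bool" where
  "lie_sc n C \<longleftrightarrow>
     (\<forall>i j h. (i \<notin> {1..n} \<or> j \<notin> {1..n} \<or> h \<notin> {1..n}) \<longrightarrow> C i j h = 0) \<and>
     (\<forall>i j h. C i j h = - C j i h) \<and>
     (\<forall>i\<in>{1..n}. \<forall>j\<in>{1..n}. \<forall>k\<in>{1..n}. \<forall>h\<in>{1..n}.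
        (\<Sum>l\<in>{1..n}. C i j l * C l k h + C j k l * C l i h + C k i l * C l j h) = 0)"

text \<open>Nice basis: each [e_i,e_j] is a multiple of a single e_h, and each contraction
  e_i \<lrcorner> de^j = - sum_l C i l j e^l is a multiple of a single e^h.\<close>
definition nice_sc :: "nat \<Rightarrow> sconst \<Rightarrow> bool" where
  "nice_sc n C \<longleftrightarrow>
     (\<forall>i\<in>{1..n}. \<forall>j\<in>{1..n}. card {h\<in>{1..n}. C i j h \<noteq> 0} \<le> 1) \<and>
     (\<forall>i\<in>{1..n}. \<forall>j\<in>{1..n}. card {l\<in>{1..n}. C i l j \<noteq> 0} \<le> 1)"

definition nilpotent_sc :: "nat \<Rightarrow> sconst \<Rightarrow> bool" where
  "nilpotent_sc n C \<longleftrightarrow> (\<exists>N. \<forall>is j. length is = N \<longrightarrow> set is \<subseteq> {1..n} \<longrightarrow> j \<in> {1..n} \<longrightarrow>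
       foldr (\<lambda>i v. brk n C (ev i) v) is (ev j) = (\<lambda>_. 0))"

definition nice_nilpotent :: "nat \<Rightarrow> sconst \<Rightarrow> bool" where
  "nice_nilpotent n C \<longleftrightarrow> lie_sc n C \<and> nice_sc n C \<and> nilpotent_sc n C"

text \<open>Nice diagram: arrow i --j--> k iff e_k is a nonzero multiple of [e_i,e_j].\<close>
definition arrow :: "nat \<Rightarrow> sconst \<Rightarrow> nat \<Rightarrow> nat \<Rightarrow> nat \<Rightarrow> bool" where
  "arrow n C i j k \<longleftrightarrow> i \<in> {1..n} \<and> j \<in> {1..n} \<and> k \<in> {1..n} \<and>
     (\<exists>\<mu>. \<mu> \<noteq> 0 \<and> (\<forall>h\<in>{1..n}. ev k h = \<mu> * brk n C (ev i) (ev j) h))"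

text \<open>The index set I_Delta, each element {{i,j},k} represented as (i,j,k) with i<j.
  Vectors in R^m are represented as functions on triples (only values on I_Delta matter).\<close>
definition I_Delta :: "nat \<Rightarrow> sconst \<Rightarrow> triple set" where
  "I_Delta n C = {(i,j,k). i < j \<and> (arrow n C i j k \<or> arrow n C j i k)}"

text \<open>Structure constants c_{ijk} with de^k = sum_{i<j} c_{ijk} e^i \<and> e^j,
  where de^k(x,y) = - e^k([x,y]).\<close>
definition sc_c :: "sconst \<Rightarrow> triple \<Rightarrow> real" where
  "sc_c C t = (case t of (i,j,k) \<Rightarrow> - C i j k)"

definition root_entry :: "triple \<Rightarrow> nat \<Rightarrow> int" where
  "root_entry t l = (case t of (i,j,k) \<Rightarrow>
     (if l = k then 1 else 0) - (if l = i then 1 else 0) - (if l = j then 1 else 0))"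

definition MT :: "nat \<Rightarrow> sconst \<Rightarrow> (triple \<Rightarrow> real) \<Rightarrow> nat \<Rightarrow> real" where
  "MT n C X = (\<lambda>l. \<Sum>t\<in>I_Delta n C. of_int (root_entry t l) * X t)"

text \<open>M_{Delta,2} applied to delta in (Z_2)^n, with Z_2 represented as {0,1} \<subseteq> int.\<close>
definition M2 :: "nat \<Rightarrow> (nat \<Rightarrow> int) \<Rightarrow> triple \<Rightarrow> int" where
  "M2 n \<delta> t = (\<Sum>l\<in>{1..n}. root_entry t l * \<delta> l) mod 2"

definition logsign :: "real \<Rightarrow> int" where
  "logsign x = (if x > 0 then 0 else 1)"

definition in_ker_MT :: "nat \<Rightarrow> sconst \<Rightarrow> (triple \<Rightarrow> real) \<Rightarrow> bool" where
  "in_ker_MT n C \<alpha> \<longleftrightarrow> (\<forall>t. t \<notin> I_Delta n C \<longrightarrow> \<alpha> t = 0) \<and> (\<forall>l\<in>{1..n}. MT n C \<alpha> l = 0)"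

definition ker_basis :: "nat \<Rightarrow> sconst \<Rightarrow> (triple \<Rightarrow> real) list \<Rightarrow> bool" where
  "ker_basis n C as \<longleftrightarrow>
     (\<forall>\<alpha>\<in>set as. in_ker_MT n C \<alpha>) \<and>
     (\<forall>a::nat \<Rightarrow> real. (\<forall>t\<in>I_Delta n C. (\<Sum>q<length as. a q * (as ! q) t) = 0)
         \<longrightarrow> (\<forall>q<length as. a q = 0)) \<and>
     (\<forall>\<beta>. in_ker_MT n C \<beta> \<longrightarrow>
         (\<exists>a::nat \<Rightarrow> real. \<forall>t\<in>I_Delta n C. \<beta> t = (\<Sum>q<length as. a q * (as ! q) t)))"

definition abspow :: "triple set \<Rightarrow> (triple \<Rightarrow> real) \<Rightarrow> (triple \<Rightarrow> real) \<Rightarrow> real" where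
  "abspow I X \<alpha> = (\<Prod>t\<in>I. \<bar>X t\<bar> powr \<alpha> t)"

text \<open>Diagonal metric g = sum g_i e^i \<otimes> e^i, nondegenerate.\<close>
definition diag_metric :: "nat \<Rightarrow> (nat \<Rightarrow> real) \<Rightarrow> bool" where
  "diag_metric n g \<longleftrightarrow> (\<forall>i\<in>{1..n}. g i \<noteq> 0)"

definition gip :: "nat \<Rightarrow> (nat \<Rightarrow> real) \<Rightarrow> (nat \<Rightarrow> real) \<Rightarrow> (nat \<Rightarrow> real) \<Rightarrow> real" where
  "gip n g u v = (\<Sum>i\<in>{1..n}. g i * u i * v i)"

text \<open>Levi-Civita connection on left-invariant vector fields (Koszul formula):
  2 g(nabla_x y, z) = g([x,y],z) - g([y,z],x) + g([z,x],y).\<close>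
definition LC :: "nat \<Rightarrow> sconst \<Rightarrow> (nat \<Rightarrow> real) \<Rightarrow> (nat \<Rightarrow> real) \<Rightarrow> (nat \<Rightarrow> real) \<Rightarrow> nat \<Rightarrow> real" where
  "LC n C g x y = (\<lambda>h. if h \<in> {1..n} then
      (gip n g (brk n C x y) (ev h) - gip n g (brk n C y (ev h)) x + gip n g (brk n C (ev h) x) y)
        / (2 * g h) else 0)"

definition curv :: "nat \<Rightarrow> sconst \<Rightarrow> (nat \<Rightarrow> real) \<Rightarrow> (nat \<Rightarrow> real) \<Rightarrow> (nat \<Rightarrow> real) \<Rightarrow> (nat \<Rightarrow> real) \<Rightarrow> nat \<Rightarrow> real" where
  "curv n C g x y z = (\<lambda>h. LC n C g x (LC n C g y z) h - LC n C g y (LC n C g x z) h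
      - LC n C g (brk n C x y) z h)"

definition ric_tensor :: "nat \<Rightarrow> sconst \<Rightarrow> (nat \<Rightarrow> real) \<Rightarrow> (nat \<Rightarrow> real) \<Rightarrow> (nat \<Rightarrow> real) \<Rightarrow> real" where
  "ric_tensor n C g y z = (\<Sum>l\<in>{1..n}. curv n C g (ev l) y z l)"

text \<open>Ricci operator: g(Ric y, z) = ric(y,z).\<close>
definition ricci_op :: "nat \<Rightarrow> sconst \<Rightarrow> (nat \<Rightarrow> real) \<Rightarrow> (nat \<Rightarrow> real) \<Rightarrow> nat \<Rightarrow> real" where
  "ricci_op n C g y = (\<lambda>h. if h \<in> {1..n} then ric_tensor n C g y (ev h) / g h else 0)"

end

theory Submission
  imports Defs
begin

text \<open>
  For a diagonal metric g on a nice nilpotent Lie algebra the Ricci operator is diagonal,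
  Ric e_h = 1/2 (M_Delta^T X_g)_h e_h with X_g = (c_ijk^2 g_k / (g_i g_j)): niceness and the
  absence of 2-cycles in the nice diagram kill all off-diagonal terms. Hence Ric = k/2 id
  exactly when X_g satisfies (K), and X_g automatically satisfies (H) and (L). In logarithmic
  coordinates log|X_g| = 2 log|c| + M_Delta log|g|, so log|X_g| - 2 log|c| lies in the image
  of M_Delta, i.e. is orthogonal to ker M_Delta^T, which is (P). Conversely (P) puts
  log|X| - 2 log|c| into the image of M_Delta; a preimage w gives g_l = (-1)^delta_l exp w_l
  with |X_g| = |X|, and (L) forces X_g = X.
\<close>

section \<open>Double sums and orthogonal projection\<close>

lemma sum_less_pairs_eq_half:
  fixes G :: "'a::linorder \<Rightarrow> 'a \<Rightarrow> real"
  assumes sym: "\<And>i j. G i j = G j i" and diag: "\<And>i. G i i = 0"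
  shows "(\<Sum>i\<in>A. \<Sum>j\<in>A. if i < j then G i j else 0) = (\<Sum>i\<in>A. \<Sum>j\<in>A. G i j) / 2"
proof -
  have split: "G i j = (if i < j then G i j else 0) + (if j < i then G j i else 0)" for i j
    using sym[of i j] diag[of i] by (cases i j rule: linorder_cases) auto
  have "(\<Sum>i\<in>A. \<Sum>j\<in>A. G i j) = (\<Sum>i\<in>A. \<Sum>j\<in>A. if i < j then G i j else 0)
      + (\<Sum>i\<in>A. \<Sum>j\<in>A. if j < i then G j i else 0)"
    by (subst split) (simp only: sum.distrib)
  also have "(\<Sum>i\<in>A. \<Sum>j\<in>A. if j < i then G j i else 0)
      = (\<Sum>i\<in>A. \<Sum>j\<in>A. if i < j then G i j else 0)"
    by (rule sum.swap)
  finally show ?thesis by simp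
qed

lemma double_sum_eq_symmetrized:
  fixes T D :: "'a \<Rightarrow> 'a \<Rightarrow> real"
  assumes "\<And>l j. l \<in> A \<Longrightarrow> j \<in> A \<Longrightarrow> T l j + T j l = D l j + D j l"
  shows "(\<Sum>l\<in>A. \<Sum>j\<in>A. T l j) = (\<Sum>l\<in>A. \<Sum>j\<in>A. D l j)"
proof -
  have "2 * (\<Sum>l\<in>A. \<Sum>j\<in>A. T l j) = (\<Sum>l\<in>A. \<Sum>j\<in>A. T l j + T j l)"
    by (simp add: sum.distrib sum.swap[of "\<lambda>l j. T j l"])
  also have "\<dots> = (\<Sum>l\<in>A. \<Sum>j\<in>A. D l j + D j l)"
    using assms by (simp cong: sum.cong)
  also have "\<dots> = 2 * (\<Sum>l\<in>A. \<Sum>j\<in>A. D l j)"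
    by (simp add: sum.distrib sum.swap[of "\<lambda>l j. D j l"])
  finally show ?thesis by simp
qed

lemma orthogonal_projection_exists:
  fixes v :: "'b \<Rightarrow> real" and r :: "'l \<Rightarrow> 'b \<Rightarrow> real"
  assumes fin_I: "finite I" and "finite S"
  shows "\<exists>w. \<forall>l\<in>S. (\<Sum>t\<in>I. (v t - (\<Sum>m\<in>S. w m * r m t)) * r l t) = 0"
  using assms(2)
proof (induction S arbitrary: v rule: finite_induct)
  case (insert s S)
  let ?p = "\<lambda>w t. \<Sum>m\<in>S. w m * r m t"
  have orth_comb: "(\<Sum>t\<in>I. x t * ?p a t) = 0" if "\<forall>l\<in>S. (\<Sum>t\<in>I. x t * r l t) = 0" for x a
  proof -
    have "(\<Sum>t\<in>I. x t * ?p a t) = (\<Sum>m\<in>S. a m * (\<Sum>t\<in>I. x t * r m t))"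
      by (simp add: sum_distrib_left sum_distrib_right mult_ac sum.swap[of _ I])
    with that show ?thesis by simp
  qed
  obtain wv where wv: "\<forall>l\<in>S. (\<Sum>t\<in>I. (v t - ?p wv t) * r l t) = 0"
    using insert.IH by blast
  obtain wu where wu: "\<forall>l\<in>S. (\<Sum>t\<in>I. (r s t - ?p wu t) * r l t) = 0"
    using insert.IH by blast
  define v' where "v' t = v t - ?p wv t" for t
  define u' where "u' t = r s t - ?p wu t" for t
  \<comment> \<open>If u' vanishes on I this gives c = 0 (x / 0 = 0), so no case split is needed here.\<close>
  define c where "c = (\<Sum>t\<in>I. v' t * u' t) / (\<Sum>t\<in>I. u' t * u' t)"
  define w where "w m = (if m = s then c else wv m - c * wu m)" for m
  have residual: "v t - (\<Sum>m\<in>insert s S. w m * r m t) = v' t - c * u' t" for t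
  proof -
    have "(\<Sum>m\<in>S. w m * r m t) = (\<Sum>m\<in>S. wv m * r m t - c * (wu m * r m t))"
      using insert.hyps(2) by (intro sum.cong refl) (auto simp: w_def algebra_simps)
    then have "(\<Sum>m\<in>S. w m * r m t) = ?p wv t - c * ?p wu t"
      by (simp add: sum_subtractf sum_distrib_left)
    with insert.hyps show ?thesis by (simp add: w_def v'_def u'_def algebra_simps)
  qed
  have orth_S: "\<forall>l\<in>S. (\<Sum>t\<in>I. (v' t - c * u' t) * r l t) = 0"
    using wv wu by (simp add: v'_def u'_def left_diff_distrib sum_subtractf mult.assoc
        sum_distrib_left[symmetric])
  have "(\<Sum>t\<in>I. (v' t - c * u' t) * u' t) = (\<Sum>t\<in>I. v' t * u' t) - c * (\<Sum>t\<in>I. u' t * u' t)"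
    by (simp add: left_diff_distrib sum_subtractf mult.assoc sum_distrib_left)
  also have "\<dots> = 0"
  proof (cases "(\<Sum>t\<in>I. u' t * u' t) = 0")
    case True
    then have "\<forall>t\<in>I. u' t = 0" using fin_I by (simp add: sum_nonneg_eq_0_iff)
    then show ?thesis by simp
  qed (simp add: c_def)
  finally have orth_u': "(\<Sum>t\<in>I. (v' t - c * u' t) * u' t) = 0" .
  have "(\<Sum>t\<in>I. (v' t - c * u' t) * r s t) =
      (\<Sum>t\<in>I. (v' t - c * u' t) * u' t + (v' t - c * u' t) * ?p wu t)"
    by (intro sum.cong refl) (simp add: u'_def algebra_simps)
  also have "\<dots> = (\<Sum>t\<in>I. (v' t - c * u' t) * u' t) + (\<Sum>t\<in>I. (v' t - c * u' t) * ?p wu t)"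
    by (rule sum.distrib)
  also have "\<dots> = 0" using orth_u' orth_comb[OF orth_S] by simp
  finally show ?case using orth_S by (intro exI[of _ w]) (simp add: residual)
qed simp

lemma orthogonal_to_kernel_imp_in_range:
  fixes v :: "'b \<Rightarrow> real" and r :: "'l \<Rightarrow> 'b \<Rightarrow> real"
  assumes fin_I: "finite I" and fin_S: "finite S"
    and ker: "\<And>\<beta>. (\<forall>t. t \<notin> I \<longrightarrow> \<beta> t = 0) \<Longrightarrow> (\<forall>l\<in>S. (\<Sum>t\<in>I. r l t * \<beta> t) = 0) \<Longrightarrow>
      (\<Sum>t\<in>I. \<beta> t * v t) = 0"
  shows "\<exists>w. \<forall>t\<in>I. v t = (\<Sum>l\<in>S. w l * r l t)"
proof -
  obtain w where w: "\<forall>l\<in>S. (\<Sum>t\<in>I. (v t - (\<Sum>m\<in>S. w m * r m t)) * r l t) = 0"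
    using orthogonal_projection_exists[OF fin_I fin_S] by blast
  define p where "p t = (\<Sum>m\<in>S. w m * r m t)" for t
  define \<beta> where "\<beta> t = (if t \<in> I then v t - p t else 0)" for t
  have "(\<Sum>t\<in>I. \<beta> t * v t) = 0"
    by (rule ker) (use w in \<open>auto simp: \<beta>_def p_def mult.commute\<close>)
  moreover have "(\<Sum>t\<in>I. \<beta> t * p t) = (\<Sum>m\<in>S. w m * (\<Sum>t\<in>I. (v t - p t) * r m t))"
    by (simp add: \<beta>_def p_def sum_distrib_left sum_distrib_right mult_ac sum.swap[of _ I])
  ultimately have "(\<Sum>t\<in>I. (v t - p t) * (v t - p t)) = 0"
    using w by (simp add: \<beta>_def p_def right_diff_distrib sum_subtractf)
  then have "\<forall>t\<in>I. v t = p t" using fin_I by (simp add: sum_nonneg_eq_0_iff)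
  then show ?thesis unfolding p_def by blast
qed

section \<open>Brackets and the Levi-Civita connection in the nice basis\<close>

lemma sum_ev_mult:
  assumes "finite A" "a \<in> A"
  shows "(\<Sum>i\<in>A. ev a i * f i) = f a"
proof -
  have "(\<Sum>i\<in>A. ev a i * f i) = (\<Sum>i\<in>A. if a = i then f i else 0)"
    by (intro sum.cong) (auto simp: ev_def)
  with assms show ?thesis by simp
qed

lemma brk_ev_left:
  assumes "a \<in> {1..n}"
  shows "brk n C (ev a) w h = (\<Sum>j\<in>{1..n}. w j * C a j h)"
  using assms by (simp add: brk_def mult.assoc sum_distrib_left[symmetric] sum_ev_mult)

lemma brk_ev_right:
  assumes "b \<in> {1..n}"
  shows "brk n C w (ev b) h = (\<Sum>i\<in>{1..n}. w i * C i b h)"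
  using assms by (simp add: brk_def mult.assoc mult.left_commute[of "ev b _"]
      sum_distrib_left[symmetric] sum_ev_mult)

lemma gip_ev_right:
  assumes "h \<in> {1..n}"
  shows "gip n g w (ev h) = g h * w h"
  using assms sum_ev_mult[of "{1..n}" h "\<lambda>i. g i * w i"]
  by (simp add: gip_def mult_ac)

text \<open>Christoffel symbols of a diagonal metric, nabla_{e_i} e_j = sum_h christoffel C g i j h e_h,
  read off from the Koszul formula in the definition of LC.\<close>
definition christoffel :: "sconst \<Rightarrow> (nat \<Rightarrow> real) \<Rightarrow> nat \<Rightarrow> nat \<Rightarrow> nat \<Rightarrow> real" where
  "christoffel C g i j h = (g h * C i j h - g i * C j h i + g j * C h i j) / (2 * g h)"

lemma LC_eq_christoffel:
  assumes h: "h \<in> {1..n}"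
  shows "LC n C g x y h = (\<Sum>i\<in>{1..n}. \<Sum>j\<in>{1..n}. x i * y j * christoffel C g i j h)"
proof -
  have 1: "gip n g (brk n C x y) (ev h) = (\<Sum>i\<in>{1..n}. \<Sum>j\<in>{1..n}. x i * y j * (g h * C i j h))"
    unfolding gip_ev_right[OF h] brk_def by (simp add: sum_distrib_left mult_ac)
  have 2: "gip n g (brk n C y (ev h)) x = (\<Sum>i\<in>{1..n}. \<Sum>j\<in>{1..n}. x i * y j * (g i * C j h i))"
    unfolding gip_def brk_ev_right[OF h] by (simp add: sum_distrib_left sum_distrib_right mult_ac)
  have 3: "gip n g (brk n C (ev h) x) y = (\<Sum>i\<in>{1..n}. \<Sum>j\<in>{1..n}. x i * y j * (g j * C h i j))"
    unfolding gip_def brk_ev_left[OF h]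
    by (simp add: sum_distrib_left sum_distrib_right mult_ac) (subst sum.swap, simp)
  show ?thesis
    using h unfolding LC_def 1 2 3
    by (simp add: sum_divide_distrib sum_subtractf[symmetric] sum.distrib[symmetric])
      (intro sum.cong refl, simp add: christoffel_def field_simps)
qed

lemma LC_ev_left:
  assumes "l \<in> {1..n}" "h \<in> {1..n}"
  shows "LC n C g (ev l) w h = (\<Sum>j\<in>{1..n}. w j * christoffel C g l j h)"
  using assms by (simp add: LC_eq_christoffel mult.assoc sum_distrib_left[symmetric] sum_ev_mult)

lemma LC_ev_right:
  assumes "b \<in> {1..n}" "h \<in> {1..n}"
  shows "LC n C g w (ev b) h = (\<Sum>i\<in>{1..n}. w i * christoffel C g i b h)"
  using assms by (simp add: LC_eq_christoffel mult.assoc mult.left_commute[of "ev b _"]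
      sum_distrib_left[symmetric] sum_ev_mult)

lemma LC_ev_ev:
  assumes "l \<in> {1..n}" "b \<in> {1..n}" "h \<in> {1..n}"
  shows "LC n C g (ev l) (ev b) h = christoffel C g l b h"
  using assms by (simp add: LC_ev_right sum_ev_mult)

section \<open>Structure constants of nice nilpotent Lie algebras\<close>

lemma lie_sc_support:
  "lie_sc n C \<Longrightarrow> C i j h \<noteq> 0 \<Longrightarrow> i \<in> {1..n} \<and> j \<in> {1..n} \<and> h \<in> {1..n}"
  unfolding lie_sc_def by blast

lemma lie_sc_antisym: "lie_sc n C \<Longrightarrow> C i j h = - C j i h"
  unfolding lie_sc_def by blast

lemma lie_sc_diag: "lie_sc n C \<Longrightarrow> C i i h = 0"
  using lie_sc_antisym[of n C i i h] by simp

lemma nice_sc_bracket_unique: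
  assumes L: "lie_sc n C" and N: "nice_sc n C" and "h \<noteq> h'"
  shows "C i j h * C i j h' = 0"
proof (rule ccontr)
  assume "C i j h * C i j h' \<noteq> 0"
  then have nz: "C i j h \<noteq> 0" "C i j h' \<noteq> 0" by auto
  with lie_sc_support[OF L] have "i \<in> {1..n}" "j \<in> {1..n}" "h \<in> {1..n}" "h' \<in> {1..n}" by blast+
  with N have "card {h\<in>{1..n}. C i j h \<noteq> 0} \<le> 1" unfolding nice_sc_def by blast
  with nz \<open>h \<in> {1..n}\<close> \<open>h' \<in> {1..n}\<close> \<open>h \<noteq> h'\<close> show False
    by (auto simp: card_le_Suc0_iff_eq)
qed

lemma nice_sc_contraction_unique:
  assumes L: "lie_sc n C" and N: "nice_sc n C" and "a \<noteq> b"
  shows "C i a j * C i b j = 0"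
proof (rule ccontr)
  assume "C i a j * C i b j \<noteq> 0"
  then have nz: "C i a j \<noteq> 0" "C i b j \<noteq> 0" by auto
  with lie_sc_support[OF L] have "i \<in> {1..n}" "j \<in> {1..n}" "a \<in> {1..n}" "b \<in> {1..n}" by blast+
  with N have "card {l\<in>{1..n}. C i l j \<noteq> 0} \<le> 1" unfolding nice_sc_def by blast
  with nz \<open>a \<in> {1..n}\<close> \<open>b \<in> {1..n}\<close> \<open>a \<noteq> b\<close> show False
    by (auto simp: card_le_Suc0_iff_eq)
qed

lemma brk_ev_ev_nice:
  assumes L: "lie_sc n C" and N: "nice_sc n C" and nz: "C x u v \<noteq> 0"
  shows "brk n C (ev x) (ev u) = (\<lambda>h. C x u v * ev v h)"
proof
  fix h
  from lie_sc_support[OF L nz] have "x \<in> {1..n}" "u \<in> {1..n}" by auto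
  then have "brk n C (ev x) (ev u) h = C x u h" by (simp add: brk_ev_left sum_ev_mult)
  also have "\<dots> = C x u v * ev v h"
    using nice_sc_bracket_unique[OF L N, of h v x u] nz by (cases "h = v") (auto simp: ev_def)
  finally show "brk n C (ev x) (ev u) h = C x u v * ev v h" .
qed

lemma brk_scale_right: "brk n C v (\<lambda>h. c * w h) = (\<lambda>h. c * brk n C v w h)"
  unfolding brk_def by (simp add: sum_distrib_left mult_ac)

lemma nilpotent_sc_long_words:
  assumes "nilpotent_sc n C"
  obtains N where "\<And>is j. N \<le> length is \<Longrightarrow> set is \<subseteq> {1..n} \<Longrightarrow> j \<in> {1..n} \<Longrightarrow>
    foldr (\<lambda>i v. brk n C (ev i) v) is (ev j) = (\<lambda>_. 0)"
proof -
  let ?f = "\<lambda>i v. brk n C (ev i) v"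
  obtain N where N: "\<And>is j. length is = N \<Longrightarrow> set is \<subseteq> {1..n} \<Longrightarrow> j \<in> {1..n} \<Longrightarrow>
      foldr ?f is (ev j) = (\<lambda>_. 0)"
    using assms unfolding nilpotent_sc_def by blast
  have zero: "foldr ?f js (\<lambda>_. 0) = (\<lambda>_. 0)" for js
    by (induction js) (simp_all add: brk_def)
  show ?thesis
  proof (rule that)
    fix "is" j assume len: "N \<le> length is" and "set is \<subseteq> {1..n}" and j: "j \<in> {1..n}"
    define m where "m = length is - N"
    have "foldr ?f (drop m is) (ev j) = (\<lambda>_. 0)"
      using N[of "drop m is" j] len j \<open>set is \<subseteq> {1..n}\<close> set_drop_subset[of m "is"]
      unfolding m_def by auto
    then have "foldr ?f (take m is @ drop m is) (ev j) = (\<lambda>_. 0)"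
      by (simp only: foldr_append o_apply zero)
    then show "foldr ?f is (ev j) = (\<lambda>_. 0)" by simp
  qed
qed

text \<open>Nilpotency forbids an arrow u -> v followed by an arrow v -> u: the corresponding
  alternating iterated brackets would reproduce a nonzero multiple of e_u forever.\<close>
lemma nice_nilpotent_no_2_cycle:
  assumes "nice_nilpotent n C"
  shows "C x u v * C y v u = 0"
proof (rule ccontr)
  assume "C x u v * C y v u \<noteq> 0"
  then have nz: "C x u v \<noteq> 0" "C y v u \<noteq> 0" by auto
  from assms have L: "lie_sc n C" and N: "nice_sc n C" and nilp: "nilpotent_sc n C"
    unfolding nice_nilpotent_def by auto
  have bounds: "x \<in> {1..n}" "u \<in> {1..n}" "y \<in> {1..n}"
    using lie_sc_support[OF L nz(1)] lie_sc_support[OF L nz(2)] by auto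
  let ?f = "\<lambda>i v. brk n C (ev i) v"
  let ?c = "C x u v * C y v u"
  have iterate: "foldr ?f (concat (replicate p [y, x])) (ev u) = (\<lambda>h. ?c ^ p * ev u h)" for p
  proof (induction p)
    case (Suc p)
    have "brk n C (ev y) (brk n C (ev x) (\<lambda>h. ?c ^ p * ev u h)) = (\<lambda>h. ?c ^ Suc p * ev u h)"
      unfolding brk_scale_right brk_ev_ev_nice[OF L N nz(1)] brk_ev_ev_nice[OF L N nz(2)]
      by (simp add: mult_ac)
    with Suc show ?case by simp
  qed simp
  obtain M where M: "\<And>is j. M \<le> length is \<Longrightarrow> set is \<subseteq> {1..n} \<Longrightarrow> j \<in> {1..n} \<Longrightarrow>
      foldr ?f is (ev j) = (\<lambda>_. 0)"
    using nilpotent_sc_long_words[OF nilp] by blast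
  have "foldr ?f (concat (replicate M [y, x])) (ev u) = (\<lambda>_. 0)"
    by (rule M) (use bounds in \<open>auto simp: length_concat sum_list_replicate\<close>)
  then have "?c ^ M * ev u u = 0" using iterate[of M] by metis
  with \<open>?c \<noteq> 0\<close> show False by (simp add: ev_def)
qed

lemma nice_nilpotent_no_loop: "nice_nilpotent n C \<Longrightarrow> C x u u = 0"
  using nice_nilpotent_no_2_cycle[of n C x u u x] by simp

lemma arrow_iff_nonzero:
  assumes L: "lie_sc n C" and N: "nice_sc n C"
  shows "arrow n C i j k \<longleftrightarrow> C i j k \<noteq> 0"
proof
  assume "arrow n C i j k"
  then obtain \<mu> where bounds: "i \<in> {1..n}" "j \<in> {1..n}" "k \<in> {1..n}"
    and \<mu>: "\<forall>h\<in>{1..n}. ev k h = \<mu> * brk n C (ev i) (ev j) h"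
    unfolding arrow_def by blast
  have "brk n C (ev i) (ev j) k = C i j k" using bounds by (simp add: brk_ev_left sum_ev_mult)
  with \<mu> bounds have "1 = \<mu> * C i j k" by (force simp: ev_def)
  then show "C i j k \<noteq> 0" by auto
next
  assume nz: "C i j k \<noteq> 0"
  then have "\<forall>h\<in>{1..n}. ev k h = (1 / C i j k) * brk n C (ev i) (ev j) h"
    by (simp add: brk_ev_ev_nice[OF L N nz])
  with lie_sc_support[OF L nz] show "arrow n C i j k"
    unfolding arrow_def using nz by (intro conjI exI[of _ "1 / C i j k"]) auto
qed

lemma I_Delta_eq:
  assumes "lie_sc n C" and "nice_sc n C"
  shows "I_Delta n C = {(i, j, k). i < j \<and> C i j k \<noteq> 0}"
proof -
  have "C j i k \<noteq> 0 \<longleftrightarrow> C i j k \<noteq> 0" for i j k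
    using lie_sc_antisym[OF assms(1), of j i k] by auto
  then show ?thesis unfolding I_Delta_def arrow_iff_nonzero[OF assms] by auto
qed

lemma I_Delta_subset:
  assumes "lie_sc n C" and "nice_sc n C"
  shows "I_Delta n C \<subseteq> {1..n} \<times> {1..n} \<times> {1..n}"
  using lie_sc_support[OF assms(1)] unfolding I_Delta_eq[OF assms] by auto

lemma finite_I_Delta:
  assumes "lie_sc n C" and "nice_sc n C"
  shows "finite (I_Delta n C)"
  using I_Delta_subset[OF assms] by (rule finite_subset) simp

lemma sum_I_Delta_sym:
  fixes F :: "triple \<Rightarrow> real"
  assumes L: "lie_sc n C" and N: "nice_sc n C"
    and sym: "\<And>i j k. F (i, j, k) = F (j, i, k)"
    and supp: "\<And>i j k. C i j k = 0 \<Longrightarrow> F (i, j, k) = 0"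
  shows "(\<Sum>t\<in>I_Delta n C. F t) = (\<Sum>i\<in>{1..n}. \<Sum>j\<in>{1..n}. \<Sum>k\<in>{1..n}. F (i, j, k)) / 2"
proof -
  let ?S = "{1..n}"
  let ?F = "\<lambda>t. if fst t < fst (snd t) then F t else (0::real)"
  have "(\<Sum>t\<in>I_Delta n C. F t) = (\<Sum>t\<in>I_Delta n C. ?F t)"
    by (rule sum.cong) (auto simp: I_Delta_eq[OF L N])
  also have "\<dots> = (\<Sum>t\<in>?S \<times> ?S \<times> ?S. ?F t)"
    using I_Delta_subset[OF L N] by (intro sum.mono_neutral_left) (auto simp: I_Delta_eq[OF L N] supp)
  also have "\<dots> = (\<Sum>i\<in>?S. \<Sum>j\<in>?S. \<Sum>k\<in>?S. ?F (i, j, k))"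
    unfolding sum.cartesian_product split_def prod.collapse ..
  also have "\<dots> = (\<Sum>i\<in>?S. \<Sum>j\<in>?S. if i < j then (\<Sum>k\<in>?S. F (i, j, k)) else 0)"
    by (intro sum.cong refl) simp
  also have "\<dots> = (\<Sum>i\<in>?S. \<Sum>j\<in>?S. \<Sum>k\<in>?S. F (i, j, k)) / 2"
    by (rule sum_less_pairs_eq_half) (simp_all add: sym supp lie_sc_diag[OF L])
  finally show ?thesis .
qed

section \<open>The Ricci operator of a diagonal metric\<close>

lemma christoffel_loop:
  assumes "nice_nilpotent n C"
  shows "christoffel C g l j l = 0"
proof -
  from assms have L: "lie_sc n C" unfolding nice_nilpotent_def by simp
  have "C j l l = 0" using nice_nilpotent_no_loop[OF assms] .
  moreover have "C l j l = 0" using lie_sc_antisym[OF L, of l j l] \<open>C j l l = 0\<close> by simp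
  ultimately show ?thesis by (simp add: christoffel_def lie_sc_diag[OF L])
qed

definition ricci_summand :: "sconst \<Rightarrow> (nat \<Rightarrow> real) \<Rightarrow> nat \<Rightarrow> nat \<Rightarrow> nat \<Rightarrow> nat \<Rightarrow> real" where
  "ricci_summand C g a h l j =
     christoffel C g l h j * christoffel C g a j l + C l a j * christoffel C g j h l"

lemma ricci_summand_symmetrized:
  assumes anti: "\<And>i j k. C i j k = - C j i k" and gl: "g l \<noteq> 0" and gj: "g j \<noteq> 0"
  shows "2 * g j * g l * (ricci_summand C g a h l j + ricci_summand C g a h j l) =
    - g h * g a * C j l h * C j l a + g j ^ 2 * C l h j * C l a j + g j * g l * C j h l * C l a j
    - g l * g j * C l h j * C a j l - g l ^ 2 * C j h l * C a j l"
proof -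
  have "C h l j = - C l h j" "C h j l = - C j h l" "C l j h = - C j l h" "C j a l = - C a j l"
     "C l j a = - C j l a" "C a l j = - C l a j" by (rule anti)+
  then show ?thesis using gl gj
    unfolding ricci_summand_def christoffel_def
    by (simp add: field_simps) (simp add: algebra_simps power2_eq_square)
qed

lemma curv_trace_term:
  assumes nn: "nice_nilpotent n C" and l: "l \<in> {1..n}" and h: "h \<in> {1..n}"
  shows "curv n C g (ev l) y (ev h) l = - (\<Sum>a\<in>{1..n}. y a * (\<Sum>j\<in>{1..n}. ricci_summand C g a h l j))"
proof -
  let ?S = "{1..n}"
  have "LC n C g (ev l) (LC n C g y (ev h)) l = 0"
    using l by (simp add: LC_ev_left christoffel_loop[OF nn])
  moreover have "LC n C g y (LC n C g (ev l) (ev h)) l =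
      (\<Sum>a\<in>?S. y a * (\<Sum>j\<in>?S. christoffel C g l h j * christoffel C g a j l))"
    unfolding LC_eq_christoffel[OF l] sum_distrib_left
    by (intro sum.cong refl) (simp add: LC_ev_ev[OF l h] mult_ac)
  moreover have "LC n C g (brk n C (ev l) y) (ev h) l =
      (\<Sum>a\<in>?S. y a * (\<Sum>j\<in>?S. C l a j * christoffel C g j h l))"
    using l h by (simp add: LC_ev_right brk_ev_left sum_distrib_left sum_distrib_right mult_ac)
      (rule sum.swap)
  ultimately show ?thesis
    by (simp add: curv_def ricci_summand_def sum.distrib distrib_left)
qed

lemma ric_tensor_ev_right:
  assumes "nice_nilpotent n C" and "h \<in> {1..n}"
  shows "ric_tensor n C g y (ev h) =
    - (\<Sum>a\<in>{1..n}. y a * (\<Sum>l\<in>{1..n}. \<Sum>j\<in>{1..n}. ricci_summand C g a h l j))"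
proof -
  have "ric_tensor n C g y (ev h) =
      (\<Sum>l\<in>{1..n}. - (\<Sum>a\<in>{1..n}. y a * (\<Sum>j\<in>{1..n}. ricci_summand C g a h l j)))"
    unfolding ric_tensor_def by (intro sum.cong refl curv_trace_term assms)
  then show ?thesis
    by (simp add: sum_negf sum_distrib_left) (rule sum.swap)
qed

definition Xg :: "sconst \<Rightarrow> (nat \<Rightarrow> real) \<Rightarrow> triple \<Rightarrow> real" where
  "Xg C g t = (case t of (i, j, k) \<Rightarrow> C i j k ^ 2 * g k / (g i * g j))"

lemma Xg_swap: "lie_sc n C \<Longrightarrow> Xg C g (j, i, k) = Xg C g (i, j, k)"
  using lie_sc_antisym[of n C j i k] by (simp add: Xg_def mult.commute)

lemma sum_ricci_summand_off_diagonal: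
  assumes nn: "nice_nilpotent n C" and g: "\<forall>i\<in>{1..n}. g i \<noteq> 0" and "a \<noteq> h"
  shows "(\<Sum>l\<in>{1..n}. \<Sum>j\<in>{1..n}. ricci_summand C g a h l j) = 0"
proof -
  from nn have L: "lie_sc n C" and N: "nice_sc n C" unfolding nice_nilpotent_def by auto
  have anti: "\<And>i j k. C i j k = - C j i k" by (rule lie_sc_antisym[OF L])
  have "(\<Sum>l\<in>{1..n}. \<Sum>j\<in>{1..n}. ricci_summand C g a h l j) = (\<Sum>l\<in>{1..n}. \<Sum>j\<in>{1..n}. 0)"
  proof (rule double_sum_eq_symmetrized)
    fix l j assume "l \<in> {1..n}" "j \<in> {1..n}"
    with g have gl: "g l \<noteq> 0" and gj: "g j \<noteq> 0" by auto
    have z: "C j l h * C j l a = 0" "C l h j * C l a j = 0" "C j h l * C a j l = 0"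
        "C j h l * C l a j = 0" "C l h j * C a j l = 0"
      using nice_sc_bracket_unique[OF L N, of h a] nice_sc_contraction_unique[OF L N, of h a]
        nice_nilpotent_no_2_cycle[OF nn, of h j l a] nice_nilpotent_no_2_cycle[OF nn, of h l j a]
        anti[of a j l] anti[of h j l] anti[of a l j] anti[of h l j] \<open>a \<noteq> h\<close> by auto
    have "2 * g j * g l * (ricci_summand C g a h l j + ricci_summand C g a h j l) =
        - g h * g a * (C j l h * C j l a) + g j ^ 2 * (C l h j * C l a j)
        + g j * g l * (C j h l * C l a j) - g l * g j * (C l h j * C a j l)
        - g l ^ 2 * (C j h l * C a j l)"
      unfolding ricci_summand_symmetrized[OF anti gl gj] by (simp add: algebra_simps)
    also have "\<dots> = 0" by (simp only: z)
    finally show "ricci_summand C g a h l j + ricci_summand C g a h j l = 0 + 0"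
      using gl gj by simp
  qed
  then show ?thesis by simp
qed

lemma sum_ricci_summand_diagonal:
  assumes nn: "nice_nilpotent n C" and g: "\<forall>i\<in>{1..n}. g i \<noteq> 0" and h: "h \<in> {1..n}"
  shows "(\<Sum>l\<in>{1..n}. \<Sum>j\<in>{1..n}. ricci_summand C g h h l j) =
    g h * (\<Sum>l\<in>{1..n}. \<Sum>j\<in>{1..n}. Xg C g (l, h, j) / 2 - Xg C g (j, l, h) / 4)"
proof -
  from nn have L: "lie_sc n C" unfolding nice_nilpotent_def by auto
  have anti: "\<And>i j k. C i j k = - C j i k" by (rule lie_sc_antisym[OF L])
  let ?D = "\<lambda>l j. g h * (Xg C g (l, h, j) / 2 - Xg C g (j, l, h) / 4)"
  have "(\<Sum>l\<in>{1..n}. \<Sum>j\<in>{1..n}. ricci_summand C g h h l j) = (\<Sum>l\<in>{1..n}. \<Sum>j\<in>{1..n}. ?D l j)"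
  proof (rule double_sum_eq_symmetrized)
    fix l j assume "l \<in> {1..n}" "j \<in> {1..n}"
    with g have gl: "g l \<noteq> 0" and gj: "g j \<noteq> 0" by auto
    have "C l h j * C j h l = 0"
      using nice_nilpotent_no_2_cycle[OF nn, of h l j h] anti[of h l j] anti[of h j l] by simp
    moreover have "C h j l = - C j h l" "C l j h = - C j l h" "C h l j = - C l h j" by (rule anti)+
    ultimately have "2 * g j * g l * (ricci_summand C g h h l j + ricci_summand C g h h j l) =
        2 * g j * g l * (?D l j + ?D j l)"
      unfolding ricci_summand_symmetrized[OF anti gl gj] using gl gj g h
      by (simp add: Xg_def field_simps power2_eq_square)
    with gl gj show "ricci_summand C g h h l j + ricci_summand C g h h j l = ?D l j + ?D j l"
      by simp
  qed
  then show ?thesis by (simp add: sum_distrib_left)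
qed

lemma MT_Xg:
  assumes L: "lie_sc n C" and N: "nice_sc n C" and h: "h \<in> {1..n}"
  shows "MT n C (Xg C g) h =
    (\<Sum>i\<in>{1..n}. \<Sum>j\<in>{1..n}. Xg C g (i, j, h)) / 2 - (\<Sum>j\<in>{1..n}. \<Sum>k\<in>{1..n}. Xg C g (h, j, k))"
proof -
  let ?S = "{1..n}" and ?X = "\<lambda>i j k. Xg C g (i, j, k)"
  have "MT n C (Xg C g) h = (\<Sum>i\<in>?S. \<Sum>j\<in>?S. \<Sum>k\<in>?S. of_int (root_entry (i, j, k) h) * ?X i j k) / 2"
    unfolding MT_def
  proof (rule sum_I_Delta_sym[OF L N])
    show "of_int (root_entry (i, j, k) h) * ?X i j k = of_int (root_entry (j, i, k) h) * ?X j i k"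
      for i j k by (simp add: root_entry_def Xg_swap[OF L])
  qed (simp add: Xg_def)
  also have "(\<Sum>i\<in>?S. \<Sum>j\<in>?S. \<Sum>k\<in>?S. of_int (root_entry (i, j, k) h) * ?X i j k) =
      (\<Sum>i\<in>?S. \<Sum>j\<in>?S. \<Sum>k\<in>?S. ev h k * ?X i j k - ev h i * ?X i j k - ev h j * ?X i j k)"
    by (intro sum.cong refl) (simp add: root_entry_def ev_def algebra_simps)
  also have "\<dots> =
      (\<Sum>i\<in>?S. \<Sum>j\<in>?S. ?X i j h) - (\<Sum>j\<in>?S. \<Sum>k\<in>?S. ?X h j k) - (\<Sum>i\<in>?S. \<Sum>k\<in>?S. ?X i h k)"
    using h by (simp add: sum_subtractf sum_distrib_left[symmetric] sum_ev_mult)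
  also have "(\<Sum>i\<in>?S. \<Sum>k\<in>?S. ?X i h k) = (\<Sum>j\<in>?S. \<Sum>k\<in>?S. ?X h j k)"
    by (simp add: Xg_swap[OF L])
  finally show ?thesis by simp
qed

lemma ricci_op_diag_metric:
  assumes nn: "nice_nilpotent n C" and g: "\<forall>i\<in>{1..n}. g i \<noteq> 0" and h: "h \<in> {1..n}"
  shows "ricci_op n C g y h = MT n C (Xg C g) h / 2 * y h"
proof -
  let ?S = "{1..n}" and ?X = "\<lambda>i j k. Xg C g (i, j, k)"
  from nn have L: "lie_sc n C" and N: "nice_sc n C" unfolding nice_nilpotent_def by auto
  have "(\<Sum>l\<in>?S. \<Sum>j\<in>?S. ricci_summand C g a h l j) =
      (if a = h then g h * (\<Sum>l\<in>?S. \<Sum>j\<in>?S. ?X l h j / 2 - ?X j l h / 4) else 0)" for a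
    using sum_ricci_summand_off_diagonal[OF nn g, of a h] sum_ricci_summand_diagonal[OF nn g h]
    by (cases "a = h") simp_all
  then have "ric_tensor n C g y (ev h) =
      - (\<Sum>a\<in>?S. y a * (if a = h then g h * (\<Sum>l\<in>?S. \<Sum>j\<in>?S. ?X l h j / 2 - ?X j l h / 4) else 0))"
    by (simp only: ric_tensor_ev_right[OF nn h])
  also have "\<dots> = - y h * g h * (\<Sum>l\<in>?S. \<Sum>j\<in>?S. ?X l h j / 2 - ?X j l h / 4)"
    using h by (simp add: if_distrib[of "(*) _"] cong: if_cong)
  also have "(\<Sum>l\<in>?S. \<Sum>j\<in>?S. ?X l h j / 2 - ?X j l h / 4)
      = (\<Sum>l\<in>?S. \<Sum>j\<in>?S. ?X l h j) / 2 - (\<Sum>l\<in>?S. \<Sum>j\<in>?S. ?X j l h) / 4"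
    by (simp add: sum_subtractf sum_divide_distrib)
  also have "(\<Sum>l\<in>?S. \<Sum>j\<in>?S. ?X l h j) = (\<Sum>l\<in>?S. \<Sum>j\<in>?S. ?X h l j)"
    by (intro sum.cong refl) (rule Xg_swap[OF L])
  also have "(\<Sum>l\<in>?S. \<Sum>j\<in>?S. ?X j l h) = (\<Sum>i\<in>?S. \<Sum>j\<in>?S. ?X i j h)"
    by (rule sum.swap)
  finally show ?thesis
    using g h by (simp add: ricci_op_def MT_Xg[OF L N h] field_simps)
qed

lemma ricci_op_eq_scalar_iff:
  assumes nn: "nice_nilpotent n C" and g: "\<forall>i\<in>{1..n}. g i \<noteq> 0"
  shows "(\<forall>y. (\<forall>h. h \<notin> {1..n} \<longrightarrow> y h = 0) \<longrightarrow> ricci_op n C g y = (\<lambda>h. k / 2 * y h))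
     \<longleftrightarrow> (\<forall>h\<in>{1..n}. MT n C (Xg C g) h = k)"
proof
  assume Ric: "\<forall>y. (\<forall>h. h \<notin> {1..n} \<longrightarrow> y h = 0) \<longrightarrow> ricci_op n C g y = (\<lambda>h. k / 2 * y h)"
  show "\<forall>h\<in>{1..n}. MT n C (Xg C g) h = k"
  proof
    fix h assume h: "h \<in> {1..n}"
    with Ric have "ricci_op n C g (ev h) h = k / 2 * ev h h" by (auto simp: ev_def)
    then show "MT n C (Xg C g) h = k" by (simp add: ricci_op_diag_metric[OF nn g h] ev_def)
  qed
next
  assume MT: "\<forall>h\<in>{1..n}. MT n C (Xg C g) h = k"
  show "\<forall>y. (\<forall>h. h \<notin> {1..n} \<longrightarrow> y h = 0) \<longrightarrow> ricci_op n C g y = (\<lambda>h. k / 2 * y h)"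
  proof (intro allI impI ext)
    fix y :: "nat \<Rightarrow> real" and h assume y: "\<forall>h. h \<notin> {1..n} \<longrightarrow> y h = 0"
    show "ricci_op n C g y h = k / 2 * y h"
    proof (cases "h \<in> {1..n}")
      case True
      with MT show ?thesis by (simp add: ricci_op_diag_metric[OF nn g True])
    next
      case False
      with y show ?thesis by (auto simp: ricci_op_def)
    qed
  qed
qed

section \<open>Logarithmic coordinates and signs\<close>

text \<open>The real logarithm is defined as an even function, ln x = ln |x| for x < 0.\<close>
lemma ln_abs_real: "ln \<bar>x\<bar> = ln (x :: real)"
  by (simp add: ln_real_def)

lemma logsign_square_mult_divide:
  fixes a b c x :: real
  assumes "a \<noteq> 0" "b \<noteq> 0" "c \<noteq> 0" "x \<noteq> 0"
  shows "logsign (x ^ 2 * c / (a * b)) = (logsign c - logsign a - logsign b) mod 2"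
proof -
  have "a > 0 \<or> a < 0" "b > 0 \<or> b < 0" "c > 0 \<or> c < 0" using assms by auto
  with \<open>x \<noteq> 0\<close> show ?thesis
    by (elim disjE) (auto simp: logsign_def zero_less_divide_iff zero_less_mult_iff
        mult_less_0_iff divide_less_0_iff)
qed

lemma logsign_eq_abs_eq:
  fixes x y :: real
  assumes "x \<noteq> 0" "y \<noteq> 0" "\<bar>x\<bar> = \<bar>y\<bar>" "logsign x = logsign y"
  shows "x = y"
  using assms by (auto simp: logsign_def abs_if split: if_splits)

lemma sum_root_entry:
  fixes f :: "nat \<Rightarrow> 'a::comm_ring_1"
  assumes "i \<in> {1..n}" "j \<in> {1..n}" "k \<in> {1..n}"
  shows "(\<Sum>l\<in>{1..n}. of_int (root_entry (i, j, k) l) * f l) = f k - f i - f j"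
proof -
  have "(\<Sum>l\<in>{1..n}. of_int (root_entry (i, j, k) l) * f l) =
     (\<Sum>l\<in>{1..n}. (if l = k then f l else 0) - (if l = i then f l else 0) - (if l = j then f l else 0))"
    by (intro sum.cong refl) (simp add: root_entry_def algebra_simps)
  also have "\<dots> = f k - f i - f j" using assms by (simp add: sum_subtractf)
  finally show ?thesis .
qed

lemma orthogonal_ker_basis_imp_orthogonal_ker:
  assumes "ker_basis n C as" and orth: "\<forall>\<alpha>\<in>set as. (\<Sum>t\<in>I_Delta n C. \<alpha> t * v t) = 0"
    and "in_ker_MT n C \<beta>"
  shows "(\<Sum>t\<in>I_Delta n C. \<beta> t * v t) = 0"
proof -
  obtain a where a: "\<forall>t\<in>I_Delta n C. \<beta> t = (\<Sum>q<length as. a q * (as ! q) t)"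
    using assms(1,3) unfolding ker_basis_def by blast
  have "(\<Sum>t\<in>I_Delta n C. \<beta> t * v t) =
      (\<Sum>q<length as. a q * (\<Sum>t\<in>I_Delta n C. (as ! q) t * v t))"
    using a by (simp add: sum_distrib_left sum_distrib_right mult_ac sum.swap[of _ "I_Delta n C"])
  also have "\<dots> = 0" using orth by simp
  finally show ?thesis .
qed

lemma M2_triple:
  assumes "i \<in> {1..n}" "j \<in> {1..n}" "k \<in> {1..n}"
  shows "M2 n \<delta> (i, j, k) = (\<delta> k - \<delta> i - \<delta> j) mod 2"
  using sum_root_entry[OF assms, of \<delta>] by (simp add: M2_def)

lemma I_Delta_XgE:
  assumes L: "lie_sc n C" and N: "nice_sc n C" and t: "t \<in> I_Delta n C"
  obtains i j k where "t = (i, j, k)" "C i j k \<noteq> 0" "i \<in> {1..n}" "j \<in> {1..n}" "k \<in> {1..n}"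
    "Xg C g t = C i j k ^ 2 * g k / (g i * g j)"
  using t lie_sc_support[OF L] by (auto simp: I_Delta_eq[OF L N] Xg_def)

lemma Xg_nonzero:
  assumes L: "lie_sc n C" and N: "nice_sc n C" and t: "t \<in> I_Delta n C"
    and g: "\<forall>i\<in>{1..n}. g i \<noteq> 0"
  shows "Xg C g t \<noteq> 0"
  using I_Delta_XgE[OF L N t, of g] g by (metis divide_eq_0_iff mult_eq_0_iff power_not_zero)

lemma logsign_Xg:
  assumes L: "lie_sc n C" and N: "nice_sc n C" and t: "t \<in> I_Delta n C"
    and g: "\<forall>i\<in>{1..n}. g i \<noteq> 0" and \<delta>: "\<forall>i\<in>{1..n}. logsign (g i) = \<delta> i"
  shows "logsign (Xg C g t) = M2 n \<delta> t"
proof -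
  obtain i j k where ijk: "t = (i, j, k)" "C i j k \<noteq> 0" "i \<in> {1..n}" "j \<in> {1..n}" "k \<in> {1..n}"
    and X: "Xg C g t = C i j k ^ 2 * g k / (g i * g j)"
    using I_Delta_XgE[OF L N t] .
  have "logsign (Xg C g t) = (logsign (g k) - logsign (g i) - logsign (g j)) mod 2"
    unfolding X using ijk g by (simp add: logsign_square_mult_divide)
  with ijk \<delta> show ?thesis by (simp add: M2_triple)
qed

lemma ln_abs_Xg:
  assumes L: "lie_sc n C" and N: "nice_sc n C" and t: "t \<in> I_Delta n C"
    and g: "\<forall>i\<in>{1..n}. g i \<noteq> 0"
  shows "ln \<bar>Xg C g t\<bar> = 2 * ln \<bar>sc_c C t\<bar> + (\<Sum>l\<in>{1..n}. of_int (root_entry t l) * ln \<bar>g l\<bar>)"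
proof -
  obtain i j k where ijk: "t = (i, j, k)" "C i j k \<noteq> 0" "i \<in> {1..n}" "j \<in> {1..n}" "k \<in> {1..n}"
    and X: "Xg C g t = C i j k ^ 2 * g k / (g i * g j)"
    using I_Delta_XgE[OF L N t] .
  have "(\<Sum>l\<in>{1..n}. of_int (root_entry t l) * ln \<bar>g l\<bar>) = (ln \<bar>g k\<bar>) - (ln \<bar>g i\<bar>) - (ln \<bar>g j\<bar>)"
    unfolding \<open>t = (i, j, k)\<close> using ijk(3-5) by (rule sum_root_entry)
  with ijk g show ?thesis
    unfolding X by (simp add: ln_abs_real sc_c_def ln_div ln_mult ln_realpow ln_minus)
qed

lemma abspow_eq_exp_sum:
  assumes "finite I" and "\<forall>t\<in>I. X t \<noteq> 0"
  shows "abspow I X \<alpha> = exp (\<Sum>t\<in>I. \<alpha> t * ln \<bar>X t\<bar>)"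
  using assms by (simp add: abspow_def powr_def exp_sum mult.commute)

lemma sum_root_matrix_eq_MT:
  "(\<Sum>t\<in>I_Delta n C. \<alpha> t * (\<Sum>l\<in>{1..n}. of_int (root_entry t l) * u l)) =
   (\<Sum>l\<in>{1..n}. u l * MT n C \<alpha> l)"
  unfolding MT_def sum_distrib_left by (subst sum.swap) (simp add: mult_ac)

lemma abspow_Xg_kernel:
  assumes L: "lie_sc n C" and N: "nice_sc n C" and g: "\<forall>i\<in>{1..n}. g i \<noteq> 0"
    and ker: "in_ker_MT n C \<alpha>"
  shows "abspow (I_Delta n C) (Xg C g) \<alpha> = abspow (I_Delta n C) (sc_c C) (\<lambda>t. 2 * \<alpha> t)"
proof -
  let ?I = "I_Delta n C"
  have "\<forall>t\<in>?I. sc_c C t \<noteq> 0" by (auto simp: I_Delta_eq[OF L N] sc_c_def)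
  moreover have "\<forall>t\<in>?I. Xg C g t \<noteq> 0" using Xg_nonzero[OF L N _ g] by blast
  moreover have "(\<Sum>t\<in>?I. \<alpha> t * ln \<bar>Xg C g t\<bar>) =
      (\<Sum>t\<in>?I. 2 * \<alpha> t * ln \<bar>sc_c C t\<bar>)
      + (\<Sum>t\<in>?I. \<alpha> t * (\<Sum>l\<in>{1..n}. of_int (root_entry t l) * ln \<bar>g l\<bar>))"
    by (simp add: ln_abs_Xg[OF L N _ g] distrib_left sum.distrib mult_ac cong: sum.cong)
  moreover have "(\<Sum>t\<in>?I. \<alpha> t * (\<Sum>l\<in>{1..n}. of_int (root_entry t l) * ln \<bar>g l\<bar>)) = 0"
    unfolding sum_root_matrix_eq_MT using ker by (simp add: in_ker_MT_def)
  ultimately show ?thesis by (simp add: abspow_eq_exp_sum finite_I_Delta[OF L N])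
qed

lemma diag_metric_from_solution:
  assumes L: "lie_sc n C" and N: "nice_sc n C" and \<delta>: "\<forall>i\<in>{1..n}. \<delta> i \<in> {0, 1}"
    and kb: "ker_basis n C as"
    and X: "\<forall>t\<in>I_Delta n C. X t \<noteq> 0"
    and sgn: "\<forall>t\<in>I_Delta n C. logsign (X t) = M2 n \<delta> t"
    and P: "\<forall>\<alpha>\<in>set as. abspow (I_Delta n C) X \<alpha> = abspow (I_Delta n C) (sc_c C) (\<lambda>t. 2 * \<alpha> t)"
  obtains g where "\<forall>i\<in>{1..n}. g i \<noteq> 0" "\<forall>i\<in>{1..n}. logsign (g i) = \<delta> i"
    "\<forall>t\<in>I_Delta n C. Xg C g t = X t"
proof -
  let ?I = "I_Delta n C"
  have fin_I: "finite ?I" by (rule finite_I_Delta[OF L N])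
  have c: "\<forall>t\<in>?I. sc_c C t \<noteq> 0" by (auto simp: I_Delta_eq[OF L N] sc_c_def)
  define v where "v t = (ln \<bar>X t\<bar>) - 2 * ln \<bar>sc_c C t\<bar>" for t
  have "\<forall>\<alpha>\<in>set as. (\<Sum>t\<in>?I. \<alpha> t * v t) = 0"
  proof
    fix \<alpha> assume "\<alpha> \<in> set as"
    with P have "exp (\<Sum>t\<in>?I. \<alpha> t * ln \<bar>X t\<bar>) = exp (\<Sum>t\<in>?I. 2 * \<alpha> t * ln \<bar>sc_c C t\<bar>)"
      by (simp add: abspow_eq_exp_sum[OF fin_I X] abspow_eq_exp_sum[OF fin_I c])
    then show "(\<Sum>t\<in>?I. \<alpha> t * v t) = 0"
      by (simp add: v_def right_diff_distrib sum_subtractf mult_ac)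
  qed
  then have "\<exists>w. \<forall>t\<in>?I. v t = (\<Sum>l\<in>{1..n}. w l * of_int (root_entry t l))"
    using orthogonal_ker_basis_imp_orthogonal_ker[OF kb]
    by (intro orthogonal_to_kernel_imp_in_range[OF fin_I finite_atLeastAtMost]) (simp add: in_ker_MT_def MT_def)
  then obtain w where w: "\<forall>t\<in>?I. v t = (\<Sum>l\<in>{1..n}. of_int (root_entry t l) * w l)"
    by (auto simp: mult.commute)
  define g where "g l = (if \<delta> l = 0 then 1 else -1) * exp (w l)" for l
  have g: "\<forall>i\<in>{1..n}. g i \<noteq> 0" by (simp add: g_def)
  have g_sign: "\<forall>i\<in>{1..n}. logsign (g i) = \<delta> i" using \<delta> by (auto simp: g_def logsign_def)
  have ln_g: "ln \<bar>g l\<bar> = w l" for l by (simp add: g_def ln_abs_real ln_minus)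
  have "Xg C g t = X t" if t: "t \<in> ?I" for t
  proof (rule logsign_eq_abs_eq)
    show "Xg C g t \<noteq> 0" using Xg_nonzero[OF L N t g] .
    show "logsign (Xg C g t) = logsign (X t)" using logsign_Xg[OF L N t g g_sign] sgn t by simp
    have "ln \<bar>Xg C g t\<bar> = 2 * ln \<bar>sc_c C t\<bar> + v t"
      using w t by (simp add: ln_abs_Xg[OF L N t g] ln_g)
    then have "ln \<bar>Xg C g t\<bar> = ln \<bar>X t\<bar>" by (simp add: v_def)
    with \<open>Xg C g t \<noteq> 0\<close> X t show "\<bar>Xg C g t\<bar> = \<bar>X t\<bar>" by simp
  qed (use X t in simp)
  with g g_sign show thesis by (intro that) auto
qed

theorem theorem2p1:
  fixes n :: nat and C :: sconst and k :: real and \<delta> :: "nat \<Rightarrow> int"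
    and as :: "(triple \<Rightarrow> real) list"
  assumes "nice_nilpotent n C"
    and "\<forall>i\<in>{1..n}. \<delta> i \<in> {0, 1}"
    and "ker_basis n C as"
  shows "(\<exists>g. diag_metric n g \<and> (\<forall>i\<in>{1..n}. logsign (g i) = \<delta> i) \<and>
            (\<forall>y. (\<forall>h. h \<notin> {1..n} \<longrightarrow> y h = 0) \<longrightarrow>
                 ricci_op n C g y = (\<lambda>h. k / 2 * y h)))
     \<longleftrightarrow>
         (\<exists>X :: triple \<Rightarrow> real.
            (\<forall>l\<in>{1..n}. MT n C X l = k) \<and>
            (\<forall>t\<in>I_Delta n C. X t \<noteq> 0) \<and>
            (\<forall>t\<in>I_Delta n C. logsign (X t) = M2 n \<delta> t) \<and>
            (\<forall>\<alpha>\<in>set as. abspow (I_Delta n C) X \<alpha> =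
                          abspow (I_Delta n C) (sc_c C) (\<lambda>t. 2 * \<alpha> t)))"
    (is "?metric \<longleftrightarrow> ?solution")
proof -
  from assms(1) have L: "lie_sc n C" and N: "nice_sc n C" unfolding nice_nilpotent_def by auto
  show ?thesis
  proof
    assume ?metric
    then obtain g where g: "\<forall>i\<in>{1..n}. g i \<noteq> 0" and g_sign: "\<forall>i\<in>{1..n}. logsign (g i) = \<delta> i"
      and "\<forall>y. (\<forall>h. h \<notin> {1..n} \<longrightarrow> y h = 0) \<longrightarrow> ricci_op n C g y = (\<lambda>h. k / 2 * y h)"
      unfolding diag_metric_def by blast
    then have "\<forall>l\<in>{1..n}. MT n C (Xg C g) l = k"
      using ricci_op_eq_scalar_iff[OF assms(1) g] by blast
    moreover have "\<forall>\<alpha>\<in>set as. abspow (I_Delta n C) (Xg C g) \<alpha> =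
        abspow (I_Delta n C) (sc_c C) (\<lambda>t. 2 * \<alpha> t)"
      using assms(3) abspow_Xg_kernel[OF L N g] unfolding ker_basis_def by blast
    ultimately show ?solution
      using Xg_nonzero[OF L N _ g] logsign_Xg[OF L N _ g g_sign] by blast
  next
    assume ?solution
    then obtain X where K: "\<forall>l\<in>{1..n}. MT n C X l = k" and X: "\<forall>t\<in>I_Delta n C. X t \<noteq> 0"
      and "\<forall>t\<in>I_Delta n C. logsign (X t) = M2 n \<delta> t"
      and "\<forall>\<alpha>\<in>set as. abspow (I_Delta n C) X \<alpha> = abspow (I_Delta n C) (sc_c C) (\<lambda>t. 2 * \<alpha> t)"
      by blast
    then obtain g where g: "\<forall>i\<in>{1..n}. g i \<noteq> 0" "\<forall>i\<in>{1..n}. logsign (g i) = \<delta> i"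
      and Xg: "\<forall>t\<in>I_Delta n C. Xg C g t = X t"
      using diag_metric_from_solution[OF L N assms(2,3) X] by blast
    have "MT n C (Xg C g) = MT n C X"
      unfolding MT_def using Xg by (intro ext sum.cong) auto
    with K have "\<forall>y. (\<forall>h. h \<notin> {1..n} \<longrightarrow> y h = 0) \<longrightarrow> ricci_op n C g y = (\<lambda>h. k / 2 * y h)"
      using ricci_op_eq_scalar_iff[OF assms(1) g(1)] by simp
    with g show ?metric unfolding diag_metric_def by blast
  qed
qed

end
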